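(* Let $B=\{[0:0:1],[0:1:0],[1:0:0],[1:1:1]\}\subset\mathbb P^2$, let $Q_B=\{a_1x_2x_3+a_2x_1x_3+a_3x_1x_2 : a_1+a_2+a_3=0\}$ be the $2$-dimensional space of quadrics vanishing on $B$, and let $S_B$ be the (4-dimensional) space of homogeneous sextics $f\in\mathbb C[x_1,x_2,x_3]$ such that the double cover of $\mathbb P^2$ branched along $\{f=0\}$ has singularities equal to or worse than rational double points of type $D_4$ above every point of $B$. Then the map $(Q_B)^3\to\mathbb C[x_1,x_2,x_3]$, $(q_1,q_2,q_3)\mapsto q_1q_2q_3$, induces a surjection $\mathbb P(Q_B)^3\to\mathbb P(S_B)$, and this surjection can be identified with the natural projection $(\mathbb P^1)^3\to(\mathbb P^1)^3/\mathfrak S_3\cong\mathbb P^3$ onto the symmetric product.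
   Context: Having a singularity "equal to or worse than a rational double point of type $D_4$" above a point $p$ means that $f$ vanishes to order at least $3$ at $p$ (equivalently, the Hessian matrix of $f$ vanishes at $p$). $\mathfrak S_3$ acts on $(\mathbb P^1)^3$ by permuting factors. *)

theory Defs
  imports Complex_Main
begin

text \<open>Polynomials in C[x1,x2,x3] are represented by their coefficient functions:
  a polynomial is a map from exponent triples (i,j,k) (monomial x1^i x2^j x3^k)
  to complex coefficients (with finite support in all uses below).\<close>

type_synonym tpoly = "nat \<times> nat \<times> nat \<Rightarrow> complex"

definition mons :: "nat \<Rightarrow> (nat \<times> nat \<times> nat) set" where
  "mons d = {(i, j, k). i + j + k = d}"

definition homog :: "nat \<Rightarrow> tpoly \<Rightarrow> bool" where
  "homog d f \<longleftrightarrow> (\<forall>m. f m \<noteq> 0 \<longrightarrow> m \<in> mons d)"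

definition pmul :: "tpoly \<Rightarrow> tpoly \<Rightarrow> tpoly" where
  "pmul f g = (\<lambda>(i, j, k). \<Sum>(a, b, c)\<in>{..i} \<times> {..j} \<times> {..k}.
                 f (a, b, c) * g (i - a, j - b, k - c))"

definition prod3 :: "tpoly \<Rightarrow> tpoly \<Rightarrow> tpoly \<Rightarrow> tpoly" where
  "prod3 q1 q2 q3 = pmul q1 (pmul q2 q3)"

text \<open>Falling factorial i (i-1) ... (i-a+1), the factor produced by d^a/dx^a on x^i.\<close>
definition ffact :: "nat \<Rightarrow> nat \<Rightarrow> complex" where
  "ffact a i = of_nat (\<Prod>t<a. i - t)"

definition pderiv_eval :: "nat \<Rightarrow> tpoly \<Rightarrow> nat \<times> nat \<times> nat \<Rightarrow> complex \<times> complex \<times> complex \<Rightarrow> complex" where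
  "pderiv_eval d f = (\<lambda>(a, b, c) (x, y, z).
     \<Sum>(i, j, k)\<in>mons d. f (i, j, k) * ffact a i * ffact b j * ffact c k
        * x ^ (i - a) * y ^ (j - b) * z ^ (k - c))"

definition vanishes_to_order :: "nat \<Rightarrow> tpoly \<Rightarrow> nat \<Rightarrow> complex \<times> complex \<times> complex \<Rightarrow> bool" where
  "vanishes_to_order d f r p \<longleftrightarrow>
     (\<forall>a b c. a + b + c < r \<longrightarrow> pderiv_eval d f (a, b, c) p = 0)"

definition Bpts :: "(complex \<times> complex \<times> complex) set" where
  "Bpts = {(0, 0, 1), (0, 1, 0), (1, 0, 0), (1, 1, 1)}"

definition quad :: "complex \<Rightarrow> complex \<Rightarrow> complex \<Rightarrow> tpoly" where
  "quad a1 a2 a3 = (\<lambda>m. if m = (0, 1, 1) then a1 else if m = (1, 0, 1) then a2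
                         else if m = (1, 1, 0) then a3 else 0)"

definition QB :: "tpoly set" where
  "QB = {quad a1 a2 a3 | a1 a2 a3. a1 + a2 + a3 = 0}"

text \<open>Sextics whose double cover has singularities at least D4 above each point of B,
  i.e. which vanish to order at least 3 at each point of B.\<close>
definition SB :: "tpoly set" where
  "SB = {f. homog 6 f \<and> (\<forall>p\<in>Bpts. vanishes_to_order 6 f 3 p)}"

definition zpoly :: tpoly where
  "zpoly = (\<lambda>_. 0)"

text \<open>f and g define the same point of a projective space.\<close>
definition proportional :: "tpoly \<Rightarrow> tpoly \<Rightarrow> bool" where
  "proportional f g \<longleftrightarrow> (\<exists>c. c \<noteq> 0 \<and> g = (\<lambda>m. c * f m))"

end

theory Submission
  imports Defs "HOL-Computational_Algebra.Fundamental_Theorem_Algebra" "HOL-Combinatorics.Permutations"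
begin

text \<open>
  The quadric \<open>a\<^sub>1 x\<^sub>2 x\<^sub>3 + a\<^sub>2 x\<^sub>1 x\<^sub>3 - (a\<^sub>1 + a\<^sub>2) x\<^sub>1 x\<^sub>2\<close> of \<open>Q\<^sub>B\<close>
  is identified with the linear polynomial \<open>a\<^sub>1 + a\<^sub>2 X\<close>, i.e. with a binary
  linear form, so that \<open>P(Q\<^sub>B) = P\<^sup>1\<close>. Vanishing to order 3 at the three
  coordinate points forces every exponent of a sextic \<open>f \<in> S\<^sub>B\<close> to be at most 3;
  on the ten remaining monomials the conditions at \<open>[1:1:1]\<close> leave a
  4-dimensional space, parametrised by binary cubics through \<open>sextic\<close>. A direct
  computation shows that \<open>q\<^sub>1 q\<^sub>2 q\<^sub>3\<close> corresponds to the product of the three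
  linear polynomials, so the product map is multiplication of binary forms
  \<open>(P\<^sup>1)\<^sup>3 \<rightarrow> P(Sym\<^sup>3) = P\<^sup>3\<close>. It is onto because every cubic splits
  over \<open>\<complex>\<close>, and its fibres are the \<open>S\<^sub>3\<close>-orbits by unique factorisation
  into linear forms, where a constant factor stands for a root at infinity.
\<close>

section \<open>Products of linear polynomials\<close>

lemma linear_poly_eq: "degree p \<le> 1 \<Longrightarrow> p = [:coeff p 0, coeff p 1:]"
  by (rule poly_eqI) (auto simp: coeff_pCons coeff_eq_0 split: nat.split)

lemma poly_linear: "degree p \<le> 1 \<Longrightarrow> poly p x = coeff p 0 + coeff p 1 * x"
  by (metis linear_poly_eq mult.commute poly_pCons poly_0 add_0_right mult_zero_right)

lemma poly_eq_iff_coeffs_upto: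
  assumes "degree P \<le> n" "degree Q \<le> n"
  shows "P = Q \<longleftrightarrow> (\<forall>i\<le>n. coeff P i = coeff Q i)"
proof
  assume coeffs: "\<forall>i\<le>n. coeff P i = coeff Q i"
  show "P = Q"
  proof (rule poly_eqI)
    fix i
    show "coeff P i = coeff Q i"
      using coeffs assms by (cases "i \<le> n") (simp_all add: coeff_eq_0)
  qed
qed simp

lemma degree_mult3_le:
  "degree p \<le> 1 \<Longrightarrow> degree q \<le> 1 \<Longrightarrow> degree r \<le> 1 \<Longrightarrow> degree (p * q * r) \<le> 3"
  using degree_mult_le[of "p * q" r] degree_mult_le[of p q] by linarith

lemma linear_polys_proportional:
  fixes p q :: "'a::field poly"
  assumes "p \<noteq> 0" "q \<noteq> 0" "degree p \<le> 1" "degree q \<le> 1"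
    and det: "coeff p 0 * coeff q 1 = coeff p 1 * coeff q 0"
  shows "\<exists>c. c \<noteq> 0 \<and> q = smult c p"
proof -
  obtain p0 p1 q0 q1 where p: "p = [:p0, p1:]" and q: "q = [:q0, q1:]"
    using assms(3,4) linear_poly_eq by metis
  show ?thesis
  proof (cases "p1 = 0")
    case True
    with assms p q have "p0 \<noteq> 0" "q1 = 0" "q0 \<noteq> 0" by auto
    with True show ?thesis by (intro exI[of _ "q0 / p0"]) (simp add: p q)
  next
    case False
    with det have q0: "q0 = q1 / p1 * p0" by (simp add: p q field_simps)
    moreover from False assms(2) q0 have "q1 \<noteq> 0" by (auto simp: q)
    ultimately show ?thesis using False by (intro exI[of _ "q1 / p1"]) (simp add: p q)
  qed
qed

lemma degree_prod_linear_less_iff: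
  fixes p :: "nat \<Rightarrow> 'a::idom poly"
  assumes p: "\<And>i. i < n \<Longrightarrow> p i \<noteq> 0 \<and> degree (p i) \<le> 1"
  shows "degree (\<Prod>i<n. p i) < n \<longleftrightarrow> (\<exists>j<n. degree (p j) = 0)"
proof -
  have deg: "degree (\<Prod>i<n. p i) = (\<Sum>i<n. degree (p i))"
    by (rule degree_prod_sum_eq) (use p in auto)
  show ?thesis
  proof
    assume less: "degree (\<Prod>i<n. p i) < n"
    show "\<exists>j<n. degree (p j) = 0"
    proof (rule ccontr)
      assume "\<not> (\<exists>j<n. degree (p j) = 0)"
      then have "degree (p i) = 1" if "i < n" for i
        using p[OF that] that by (auto simp: le_Suc_eq)
      then have "(\<Sum>i<n. degree (p i)) = n" by simp
      with deg less show False by simp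
    qed
  next
    assume "\<exists>j<n. degree (p j) = 0"
    then obtain j where "j < n" "degree (p j) = 0" by blast
    then have "(\<Sum>i<n. degree (p i)) = (\<Sum>i\<in>{..<n} - {j}. degree (p i))"
      by (simp add: sum.remove)
    also have "\<dots> \<le> (\<Sum>i\<in>{..<n} - {j}. 1)"
      using p by (intro sum_mono) auto
    also have "\<dots> < n"
      using \<open>j < n\<close> by simp
    finally show "degree (\<Prod>i<n. p i) < n"
      using deg by simp
  qed
qed

lemma linear_factor_match:
  fixes p q :: "nat \<Rightarrow> 'a::field poly"
  assumes p: "\<And>i. i < n \<Longrightarrow> p i \<noteq> 0 \<and> degree (p i) \<le> 1"
    and q: "\<And>i. i < n \<Longrightarrow> q i \<noteq> 0 \<and> degree (q i) \<le> 1"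
    and eq: "(\<Prod>i<n. q i) = smult k (\<Prod>i<n. p i)" and "m < n"
  shows "\<exists>j<n. \<exists>c. c \<noteq> 0 \<and> q m = smult c (p j)"
proof -
  have qm: "q m \<noteq> 0" "degree (q m) \<le> 1" using q \<open>m < n\<close> by auto
  have "k \<noteq> 0" using eq q by auto
  consider "degree (q m) = 0" | "degree (q m) = 1" using qm by linarith
  then obtain j where j: "j < n" and det: "coeff (p j) 0 * coeff (q m) 1 = coeff (p j) 1 * coeff (q m) 0"
  proof cases
    case 1
    \<comment> \<open>A constant factor is a root at infinity: it lowers the degree of the product.\<close>
    then have "degree (\<Prod>i<n. q i) < n"
      using degree_prod_linear_less_iff[where p = q, OF q] \<open>m < n\<close> by blast
    then have "degree (\<Prod>i<n. p i) < n"
      using eq \<open>k \<noteq> 0\<close> by simp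
    then obtain j where j: "j < n" "degree (p j) = 0"
      using degree_prod_linear_less_iff[where p = p, OF p] by blast
    from j(2) 1 have "coeff (p j) 0 * coeff (q m) 1 = coeff (p j) 1 * coeff (q m) 0"
      by (simp add: coeff_eq_0)
    with j(1) show ?thesis by (rule that)
  next
    case 2
    define r where "r = - coeff (q m) 0 / coeff (q m) 1"
    have "coeff (q m) 1 \<noteq> 0" using 2 qm leading_coeff_neq_0 by fastforce
    then have "poly (q m) r = 0"
      by (simp add: poly_linear[OF qm(2)] r_def)
    then have "poly (\<Prod>i<n. q i) r = 0"
      using \<open>m < n\<close> by (auto simp: poly_prod)
    then obtain j where j: "j < n" "poly (p j) r = 0"
      using \<open>k \<noteq> 0\<close> by (auto simp: eq poly_prod)
    then have "coeff (p j) 0 + coeff (p j) 1 * r = 0"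
      using p[OF j(1)] by (simp add: poly_linear)
    with \<open>coeff (q m) 1 \<noteq> 0\<close> have "coeff (p j) 0 * coeff (q m) 1 = coeff (p j) 1 * coeff (q m) 0"
      by (simp add: r_def field_simps)
    with j(1) show ?thesis by (rule that)
  qed
  with p[OF j] qm show ?thesis
    using linear_polys_proportional by blast
qed

lemma prod_transpose_last:
  assumes "j < Suc n"
  shows "(\<Prod>i<Suc n. f i) = (\<Prod>i<n. f (transpose j n i)) * f j"
proof -
  have "transpose j n permutes {..<Suc n}"
    using assms by (intro permutes_swap_id) auto
  from prod.permute[OF this, of f] show ?thesis
    by (simp del: prod.lessThan_Suc) (simp add: comp_def)
qed

lemma prod_linear_factors_unique:
  fixes p q :: "nat \<Rightarrow> 'a::field poly"
  assumes "\<And>i. i < n \<Longrightarrow> p i \<noteq> 0 \<and> degree (p i) \<le> 1"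
    and "\<And>i. i < n \<Longrightarrow> q i \<noteq> 0 \<and> degree (q i) \<le> 1"
    and "(\<Prod>i<n. q i) = smult k (\<Prod>i<n. p i)"
  shows "\<exists>\<sigma>. \<sigma> permutes {..<n} \<and> (\<forall>i<n. \<exists>c. c \<noteq> 0 \<and> q i = smult c (p (\<sigma> i)))"
  using assms
proof (induction n arbitrary: p k)
  case 0
  show ?case using permutes_id by blast
next
  case (Suc n)
  obtain j c where j: "j < Suc n" "c \<noteq> 0" "q n = smult c (p j)"
    using linear_factor_match[OF Suc.prems, of n] by blast
  define \<tau> where "\<tau> = transpose j n"
  have \<tau>: "\<tau> permutes {..<Suc n}"
    unfolding \<tau>_def using j(1) by (intro permutes_swap_id) auto
  define p' where "p' = p \<circ> \<tau>"
  have "smult c (\<Prod>i<n. q i) * p j = smult k (\<Prod>i<n. p' i) * p j"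
    using Suc.prems(3) j(3) prod_transpose_last[OF j(1), of p] by (simp add: p'_def \<tau>_def mult_ac)
  then have "smult c (\<Prod>i<n. q i) = smult k (\<Prod>i<n. p' i)"
    using Suc.prems(1)[OF j(1)] mult_right_cancel by blast
  then have "(\<Prod>i<n. q i) = smult (k / c) (\<Prod>i<n. p' i)"
    using j(2) by (metis divide_inverse_commute smult_smult smult_1_left field_class.field_inverse)
  moreover have "p' i \<noteq> 0 \<and> degree (p' i) \<le> 1" "q i \<noteq> 0 \<and> degree (q i) \<le> 1" if "i < n" for i
    using Suc.prems(1,2) permutes_in_image[OF \<tau>] that by (simp_all add: p'_def)
  ultimately obtain \<sigma> where \<sigma>: "\<sigma> permutes {..<n}"
      "\<forall>i<n. \<exists>c. c \<noteq> 0 \<and> q i = smult c (p' (\<sigma> i))"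
    using Suc.IH[of p' "k / c"] by blast
  have "\<tau> \<circ> \<sigma> permutes {..<Suc n}"
    using permutes_subset[OF \<sigma>(1)] \<tau> by (intro permutes_compose) auto
  moreover have "\<sigma> n = n"
    using permutes_not_in[OF \<sigma>(1)] by simp
  then have "\<forall>i<Suc n. \<exists>c. c \<noteq> 0 \<and> q i = smult c (p ((\<tau> \<circ> \<sigma>) i))"
    using \<sigma>(2) j by (auto simp: less_Suc_eq p'_def \<tau>_def)
  ultimately show ?case by blast
qed

lemma prod_smult_reindex:
  assumes "bij_betw \<sigma> A A" "\<And>i. i \<in> A \<Longrightarrow> q i = smult (c i) (p (\<sigma> i))"
  shows "prod q A = smult (prod c A) (prod p A)"
proof -
  have "prod q A = smult (prod c A) (\<Prod>i\<in>A. p (\<sigma> i))"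
    using assms(2) by (simp add: prod_smult[symmetric])
  also have "(\<Prod>i\<in>A. p (\<sigma> i)) = prod p A"
    by (rule prod.reindex_bij_betw[OF assms(1)])
  finally show ?thesis .
qed

lemma prod_linear_factors_smult_iff:
  fixes p q :: "nat \<Rightarrow> 'a::field poly"
  assumes "\<And>i. i < n \<Longrightarrow> p i \<noteq> 0 \<and> degree (p i) \<le> 1"
    and "\<And>i. i < n \<Longrightarrow> q i \<noteq> 0 \<and> degree (q i) \<le> 1"
  shows "(\<exists>k. k \<noteq> 0 \<and> (\<Prod>i<n. q i) = smult k (\<Prod>i<n. p i)) \<longleftrightarrow>
    (\<exists>\<sigma>. bij_betw \<sigma> {..<n} {..<n} \<and> (\<forall>i<n. \<exists>c. c \<noteq> 0 \<and> q i = smult c (p (\<sigma> i))))"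
proof
  assume "\<exists>k. k \<noteq> 0 \<and> (\<Prod>i<n. q i) = smult k (\<Prod>i<n. p i)"
  then obtain k where "(\<Prod>i<n. q i) = smult k (\<Prod>i<n. p i)" by blast
  from prod_linear_factors_unique[OF assms this]
  show "\<exists>\<sigma>. bij_betw \<sigma> {..<n} {..<n} \<and> (\<forall>i<n. \<exists>c. c \<noteq> 0 \<and> q i = smult c (p (\<sigma> i)))"
    using permutes_imp_bij by blast
next
  assume "\<exists>\<sigma>. bij_betw \<sigma> {..<n} {..<n} \<and> (\<forall>i<n. \<exists>c. c \<noteq> 0 \<and> q i = smult c (p (\<sigma> i)))"
  then obtain \<sigma> c where \<sigma>: "bij_betw \<sigma> {..<n} {..<n}"
    and c: "\<forall>i<n. c i \<noteq> 0 \<and> q i = smult (c i) (p (\<sigma> i))"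
    by metis
  have "(\<Prod>i<n. q i) = smult (\<Prod>i<n. c i) (\<Prod>i<n. p i)"
    using c by (intro prod_smult_reindex[OF \<sigma>]) auto
  moreover have "(\<Prod>i<n. c i) \<noteq> 0" using c by simp
  ultimately show "\<exists>k. k \<noteq> 0 \<and> (\<Prod>i<n. q i) = smult k (\<Prod>i<n. p i)" by blast
qed

lemma complex_poly_prod_linear_factors:
  fixes P :: "complex poly"
  assumes "degree P \<le> n"
  obtains p where "\<And>i. i < n \<Longrightarrow> degree (p i) \<le> 1" "P = smult (lead_coeff P) (\<Prod>i<n. p i)"
proof -
  obtain root where root: "smult (lead_coeff P) (\<Prod>i<degree P. [:- root i, 1:]) = P"
    by (rule complex_poly_decompose')
  define p where "p i = (if i < degree P then [:- root i, 1:] else 1)" for i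
  have "(\<Prod>i<n. p i) = (\<Prod>i<degree P. [:- root i, 1:])"
    using assms by (intro prod.mono_neutral_cong_right) (auto simp: p_def)
  with root have "P = smult (lead_coeff P) (\<Prod>i<n. p i)" by simp
  moreover have "degree (p i) \<le> 1" for i by (simp add: p_def)
  ultimately show ?thesis using that by blast
qed

section \<open>Sparse products of polynomials in three variables\<close>

text \<open>Lists of (exponent, coefficient) pairs let the simplifier multiply explicit polynomials.\<close>

definition tpoly_of_terms :: "((nat \<times> nat \<times> nat) \<times> complex) list \<Rightarrow> tpoly" where
  "tpoly_of_terms ts = (\<lambda>m. sum_list (map (\<lambda>(e, c). if m = e then c else 0) ts))"

fun exp_add :: "nat \<times> nat \<times> nat \<Rightarrow> nat \<times> nat \<times> nat \<Rightarrow> nat \<times> nat \<times> nat" where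
  "exp_add (a, b, c) (a', b', c') = (a + a', b + b', c + c')"

definition mult_terms ::
  "((nat \<times> nat \<times> nat) \<times> complex) list \<Rightarrow> ((nat \<times> nat \<times> nat) \<times> complex) list
     \<Rightarrow> ((nat \<times> nat \<times> nat) \<times> complex) list" where
  "mult_terms ts us = [(exp_add e e', c * c'). (e, c) \<leftarrow> ts, (e', c') \<leftarrow> us]"

lemma tpoly_of_terms_outside: "m \<notin> fst ` set ts \<Longrightarrow> tpoly_of_terms ts m = 0"
  by (induction ts) (auto simp: tpoly_of_terms_def)

lemma tpoly_of_terms_Cons:
  "tpoly_of_terms ((e, c) # ts) = (\<lambda>m. (if m = e then c else 0) + tpoly_of_terms ts m)"
  by (simp add: tpoly_of_terms_def)

lemma pmul_add_left: "pmul (\<lambda>m. f m + h m) g = (\<lambda>m. pmul f g m + pmul h g m)"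
  unfolding pmul_def by (rule ext) (simp add: sum.distrib[symmetric] split_def distrib_right)

lemma pmul_monomial_left:
  "pmul (\<lambda>m. if m = (a, b, c) then x else 0) g (i, j, k) =
     (if a \<le> i \<and> b \<le> j \<and> c \<le> k then x * g (i - a, j - b, k - c) else 0)"
proof -
  have "pmul (\<lambda>m. if m = (a, b, c) then x else 0) g (i, j, k) =
      (\<Sum>e\<in>{..i} \<times> {..j} \<times> {..k}. if e = (a, b, c) then x * g (i - a, j - b, k - c) else 0)"
    unfolding pmul_def split_conv by (intro sum.cong) (auto split: if_splits)
  then show ?thesis by simp
qed

lemma pmul_monomial_terms:
  "pmul (\<lambda>m. if m = e then x else 0) (tpoly_of_terms us) =
     tpoly_of_terms (map (\<lambda>(e', c'). (exp_add e e', x * c')) us)"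
proof (rule ext, clarify)
  fix i j k
  obtain a b c where e: "e = (a, b, c)" by (cases e) auto
  show "pmul (\<lambda>m. if m = e then x else 0) (tpoly_of_terms us) (i, j, k) =
      tpoly_of_terms (map (\<lambda>(e', c'). (exp_add e e', x * c')) us) (i, j, k)"
    unfolding e pmul_monomial_left
  proof (induction us)
    case (Cons u us)
    obtain a' b' c' y where u: "u = ((a', b', c'), y)" by (cases u) auto
    show ?case using Cons by (auto simp: tpoly_of_terms_def u distrib_left)
  qed (simp add: tpoly_of_terms_def)
qed

lemma pmul_terms:
  "pmul (tpoly_of_terms ts) (tpoly_of_terms us) = tpoly_of_terms (mult_terms ts us)"
proof (induction ts)
  case Nil
  then show ?case by (simp add: tpoly_of_terms_def mult_terms_def pmul_def)
next
  case (Cons t ts)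
  obtain e x where t: "t = (e, x)" by (cases t) auto
  have "mult_terms (t # ts) us = map (\<lambda>(e', c'). (exp_add e e', x * c')) us @ mult_terms ts us"
    by (simp add: mult_terms_def t)
  then show ?case
    by (simp add: t tpoly_of_terms_Cons pmul_add_left pmul_monomial_terms Cons)
       (simp add: tpoly_of_terms_def)
qed

section \<open>Partial derivatives at the points of \<open>B\<close>\<close>


lemma finite_mons: "finite (mons d)"
proof (rule finite_subset)
  show "mons d \<subseteq> {..d} \<times> {..d} \<times> {..d}" by (auto simp: mons_def)
qed simp

lemma ffact_0 [simp]: "ffact 0 i = 1"
  by (simp add: ffact_def)

lemma ffact_1 [simp]: "ffact (Suc 0) i = of_nat i"
  by (simp add: ffact_def)

lemma ffact_2 [simp]: "ffact 2 i = of_nat i * of_nat (i - 1)"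
  by (simp add: ffact_def eval_nat_numeral lessThan_Suc)

lemma ffact_eq_0: "i < a \<Longrightarrow> ffact a i = 0"
  by (auto simp: ffact_def)

lemma ffact_self_nonzero: "ffact a a \<noteq> 0"
  by (auto simp: ffact_def)

lemma ffact_times_zero_power: "ffact a i * (0::complex) ^ (i - a) = (if i = a then ffact a a else 0)"
  by (cases "i < a") (auto simp: ffact_eq_0)

lemma pderiv_eval_apply:
  "pderiv_eval d f (a, b, c) (x, y, z) = (\<Sum>(i, j, k)\<in>mons d.
     f (i, j, k) * ffact a i * ffact b j * ffact c k * x ^ (i - a) * y ^ (j - b) * z ^ (k - c))"
  by (simp add: pderiv_eval_def)

lemma pderiv_eval_e1:
  "pderiv_eval d f (a, b, c) (1, 0, 0) =
     (if b + c \<le> d then f (d - b - c, b, c) * ffact a (d - b - c) * ffact b b * ffact c c else 0)"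
proof -
  have "pderiv_eval d f (a, b, c) (1, 0, 0) = (\<Sum>(i, j, k)\<in>mons d.
      f (i, j, k) * ffact a i * (ffact b j * 0 ^ (j - b)) * (ffact c k * 0 ^ (k - c)))"
    unfolding pderiv_eval_apply by (intro sum.cong) (auto simp: mult_ac)
  also have "\<dots> = (\<Sum>m\<in>mons d. if m = (d - b - c, b, c)
      then f (d - b - c, b, c) * ffact a (d - b - c) * ffact b b * ffact c c else 0)"
    by (intro sum.cong) (auto simp: ffact_times_zero_power mons_def split: if_splits)
  finally show ?thesis by (simp add: finite_mons) (auto simp: mons_def)
qed

lemma pderiv_eval_e2:
  "pderiv_eval d f (a, b, c) (0, 1, 0) =
     (if a + c \<le> d then f (a, d - a - c, c) * ffact a a * ffact b (d - a - c) * ffact c c else 0)"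
proof -
  have "pderiv_eval d f (a, b, c) (0, 1, 0) = (\<Sum>(i, j, k)\<in>mons d.
      f (i, j, k) * (ffact a i * 0 ^ (i - a)) * ffact b j * (ffact c k * 0 ^ (k - c)))"
    unfolding pderiv_eval_apply by (intro sum.cong) (auto simp: mult_ac)
  also have "\<dots> = (\<Sum>m\<in>mons d. if m = (a, d - a - c, c)
      then f (a, d - a - c, c) * ffact a a * ffact b (d - a - c) * ffact c c else 0)"
    by (intro sum.cong) (auto simp: ffact_times_zero_power mons_def split: if_splits)
  finally show ?thesis by (simp add: finite_mons) (auto simp: mons_def)
qed

lemma pderiv_eval_e3:
  "pderiv_eval d f (a, b, c) (0, 0, 1) =
     (if a + b \<le> d then f (a, b, d - a - b) * ffact a a * ffact b b * ffact c (d - a - b) else 0)"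
proof -
  have "pderiv_eval d f (a, b, c) (0, 0, 1) = (\<Sum>(i, j, k)\<in>mons d.
      f (i, j, k) * (ffact a i * 0 ^ (i - a)) * (ffact b j * 0 ^ (j - b)) * ffact c k)"
    unfolding pderiv_eval_apply by (intro sum.cong) (auto simp: mult_ac)
  also have "\<dots> = (\<Sum>m\<in>mons d. if m = (a, b, d - a - b)
      then f (a, b, d - a - b) * ffact a a * ffact b b * ffact c (d - a - b) else 0)"
    by (intro sum.cong) (auto simp: ffact_times_zero_power mons_def split: if_splits)
  finally show ?thesis by (simp add: finite_mons) (auto simp: mons_def)
qed

lemma vanishes_to_order_e1_iff:
  "vanishes_to_order d f r (1, 0, 0) \<longleftrightarrow> (\<forall>i j k. i + j + k = d \<and> j + k < r \<longrightarrow> f (i, j, k) = 0)"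
proof
  assume van: "vanishes_to_order d f r (1, 0, 0)"
  show "\<forall>i j k. i + j + k = d \<and> j + k < r \<longrightarrow> f (i, j, k) = 0"
  proof (intro allI impI, elim conjE)
    fix i j k assume "i + j + k = d" "j + k < r"
    with van have "pderiv_eval d f (0, j, k) (1, 0, 0) = 0"
      unfolding vanishes_to_order_def by auto
    with \<open>i + j + k = d\<close> show "f (i, j, k) = 0"
      by (auto simp: pderiv_eval_e1 ffact_self_nonzero)
  qed
qed (auto simp: vanishes_to_order_def pderiv_eval_e1)

lemma vanishes_to_order_e2_iff:
  "vanishes_to_order d f r (0, 1, 0) \<longleftrightarrow> (\<forall>i j k. i + j + k = d \<and> i + k < r \<longrightarrow> f (i, j, k) = 0)"
proof
  assume van: "vanishes_to_order d f r (0, 1, 0)"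
  show "\<forall>i j k. i + j + k = d \<and> i + k < r \<longrightarrow> f (i, j, k) = 0"
  proof (intro allI impI, elim conjE)
    fix i j k assume "i + j + k = d" "i + k < r"
    with van have "pderiv_eval d f (i, 0, k) (0, 1, 0) = 0"
      unfolding vanishes_to_order_def by auto
    with \<open>i + j + k = d\<close> show "f (i, j, k) = 0"
      by (auto simp: pderiv_eval_e2 ffact_self_nonzero)
  qed
qed (auto simp: vanishes_to_order_def pderiv_eval_e2)

lemma vanishes_to_order_e3_iff:
  "vanishes_to_order d f r (0, 0, 1) \<longleftrightarrow> (\<forall>i j k. i + j + k = d \<and> i + j < r \<longrightarrow> f (i, j, k) = 0)"
proof
  assume van: "vanishes_to_order d f r (0, 0, 1)"
  show "\<forall>i j k. i + j + k = d \<and> i + j < r \<longrightarrow> f (i, j, k) = 0"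
  proof (intro allI impI, elim conjE)
    fix i j k assume "i + j + k = d" "i + j < r"
    with van have "pderiv_eval d f (i, j, 0) (0, 0, 1) = 0"
      unfolding vanishes_to_order_def by auto
    with \<open>i + j + k = d\<close> show "f (i, j, k) = 0"
      by (auto simp: pderiv_eval_e3 ffact_self_nonzero)
  qed
qed (auto simp: vanishes_to_order_def pderiv_eval_e3)

lemma pderiv_eval_at_111:
  assumes "S \<subseteq> mons d" "\<And>m. m \<notin> S \<Longrightarrow> f m = 0"
  shows "pderiv_eval d f (a, b, c) (1, 1, 1) =
    (\<Sum>(i, j, k)\<in>S. f (i, j, k) * ffact a i * ffact b j * ffact c k)"
  unfolding pderiv_eval_apply power_one mult_1_right
proof (rule sum.mono_neutral_right)
  show "\<forall>m\<in>mons d - S. (case m of (i, j, k) \<Rightarrow> f (i, j, k) * ffact a i * ffact b j * ffact c k) = 0"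
    using assms(2) by auto
qed (use finite_mons assms(1) in auto)

lemma orders_below_3:
  "(a::nat) + b + c < 3 \<Longrightarrow> (a, b, c) \<in> {(0,0,0), (1,0,0), (0,1,0), (0,0,1), (2,0,0), (0,2,0), (0,0,2),
      (1,1,0), (1,0,1), (0,1,1)}"
  by (cases a; cases b; cases c) (auto simp: eval_nat_numeral)

section \<open>The space \<open>S\<^sub>B\<close>\<close>

text \<open>
  \<open>sextic c = \<Sum>\<^sub>k c\<^sub>k Q\<^sub>0^(3-k) Q\<^sub>1^k\<close> with \<open>Q\<^sub>0 = x\<^sub>2 (x\<^sub>3 - x\<^sub>1)\<close>
  and \<open>Q\<^sub>1 = x\<^sub>1 (x\<^sub>3 - x\<^sub>2)\<close> is the sextic attached to the binary cubic
  \<open>c\<^sub>0 + c\<^sub>1 X + c\<^sub>2 X\<^sup>2 + c\<^sub>3 X\<^sup>3\<close> (see \<open>prod3_quad\<close>).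
\<close>

definition sextic :: "(nat \<Rightarrow> complex) \<Rightarrow> tpoly" where
  "sextic c = (\<lambda>m. if m = (0,3,3) then c 0 else if m = (1,2,3) then c 1
     else if m = (2,1,3) then c 2 else if m = (3,0,3) then c 3
     else if m = (1,3,2) then -3 * c 0 - c 1
     else if m = (2,3,1) then 3 * c 0 + 2 * c 1 + c 2
     else if m = (3,3,0) then - c 0 - c 1 - c 2 - c 3
     else if m = (2,2,2) then -2 * c 1 - 2 * c 2
     else if m = (3,2,1) then c 1 + 2 * c 2 + 3 * c 3
     else if m = (3,1,2) then - c 2 - 3 * c 3 else 0)"

definition sextic_exps :: "(nat \<times> nat \<times> nat) set" where
  "sextic_exps = {(i, j, k). i + j + k = 6 \<and> i \<le> 3 \<and> j \<le> 3 \<and> k \<le> 3}"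

lemma sextic_exps_eq:
  "sextic_exps = {(0,3,3), (1,2,3), (2,1,3), (3,0,3), (1,3,2), (2,3,1), (3,3,0), (2,2,2), (3,2,1), (3,1,2)}"
proof (intro set_eqI iffI)
  fix m assume "m \<in> sextic_exps"
  then obtain i j k where m: "m = (i, j, k)" "k = 6 - i - j" "3 \<le> i + j" "i \<le> 3" "j \<le> 3"
    unfolding sextic_exps_def by auto
  have "i = 0 \<or> i = 1 \<or> i = 2 \<or> i = 3" "j = 0 \<or> j = 1 \<or> j = 2 \<or> j = 3" using m by arith+
  with m show "m \<in> {(0,3,3), (1,2,3), (2,1,3), (3,0,3), (1,3,2), (2,3,1), (3,3,0), (2,2,2), (3,2,1), (3,1,2)}"
    by (elim disjE) simp_all
qed (auto simp: sextic_exps_def)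

lemma sextic_exps_subset_mons: "sextic_exps \<subseteq> mons 6"
  by (auto simp: sextic_exps_def mons_def)

lemma sextic_outside: "m \<notin> sextic_exps \<Longrightarrow> sextic c m = 0"
  unfolding sextic_exps_eq sextic_def by simp

lemma sextic_at:
  assumes "i \<le> 3"
  shows "sextic c (i, 3 - i, 3) = c i"
proof -
  from assms have "i = 0 \<or> i = 1 \<or> i = 2 \<or> i = 3" by arith
  then show ?thesis by (elim disjE) (simp_all add: sextic_def)
qed

lemma sextic_eq_iff: "sextic c = sextic c' \<longleftrightarrow> (\<forall>i\<le>3. c i = c' i)"
proof
  assume "sextic c = sextic c'"
  then show "\<forall>i\<le>3. c i = c' i" using sextic_at by metis
next
  assume "\<forall>i\<le>3. c i = c' i"
  then have "c 0 = c' 0" "c 1 = c' 1" "c 2 = c' 2" "c 3 = c' 3" by simp_all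
  then show "sextic c = sextic c'" unfolding sextic_def by (simp only:)
qed

lemma sextic_smult: "sextic (\<lambda>i. k * c i) = (\<lambda>m. k * sextic c m)"
  by (rule ext) (simp add: sextic_def algebra_simps)

lemma sextic_zero: "sextic (\<lambda>i. 0) = zpoly"
  by (rule ext) (simp add: sextic_def zpoly_def)

lemma sextic_sum_basis: "(\<lambda>m. \<Sum>i<4. c i * sextic (\<lambda>j. if j = i then 1 else 0) m) = sextic c"
  by (rule ext) (simp add: sextic_def lessThan_nat_numeral)

lemma sextic_vanishes_at_111: "vanishes_to_order 6 (sextic c) 3 (1, 1, 1)"
  unfolding vanishes_to_order_def
proof (intro allI impI)
  fix a b d :: nat
  assume "a + b + d < 3"
  then have order: "(a, b, d) \<in> {(0,0,0), (1,0,0), (0,1,0), (0,0,1), (2,0,0), (0,2,0), (0,0,2),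
      (1,1,0), (1,0,1), (0,1,1)}" by (rule orders_below_3)
  have "pderiv_eval 6 (sextic c) (a, b, d) (1, 1, 1) =
      (\<Sum>(i, j, k)\<in>sextic_exps. sextic c (i, j, k) * ffact a i * ffact b j * ffact d k)"
    by (rule pderiv_eval_at_111[OF sextic_exps_subset_mons]) (rule sextic_outside)
  also have "\<dots> = 0"
    using order unfolding sextic_exps_eq
    by (elim insertE emptyE) (simp_all add: sextic_def algebra_simps)
  finally show "pderiv_eval 6 (sextic c) (a, b, d) (1, 1, 1) = 0" .
qed

lemma sextic_in_SB: "sextic c \<in> SB"
  unfolding SB_def
proof (intro CollectI conjI ballI)
  show "homog 6 (sextic c)"
    unfolding homog_def using sextic_outside sextic_exps_subset_mons by blast
next
  fix p assume "p \<in> Bpts"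
  moreover have "sextic c (i, j, k) = 0"
    if "i + j + k = 6" "i + j < 3 \<or> i + k < 3 \<or> j + k < 3" for i j k
    using that by (intro sextic_outside) (auto simp: sextic_exps_def)
  ultimately show "vanishes_to_order 6 (sextic c) 3 p"
    unfolding Bpts_def using sextic_vanishes_at_111
    by (auto simp: vanishes_to_order_e1_iff vanishes_to_order_e2_iff vanishes_to_order_e3_iff)
qed

lemma SB_support:
  assumes "f \<in> SB" "f m \<noteq> 0"
  shows "m \<in> sextic_exps"
proof -
  obtain i j k where m: "m = (i, j, k)" by (cases m)
  have "i + j + k = 6" using assms unfolding SB_def homog_def mons_def m by auto
  moreover have "vanishes_to_order 6 f 3 p" if "p \<in> Bpts" for p
    using assms(1) that unfolding SB_def by blast
  then have "vanishes_to_order 6 f 3 (0, 0, 1)" "vanishes_to_order 6 f 3 (0, 1, 0)"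
    "vanishes_to_order 6 f 3 (1, 0, 0)" by (simp_all add: Bpts_def)
  ultimately have "\<not> i + j < 3" "\<not> i + k < 3" "\<not> j + k < 3"
    using assms(2) unfolding m vanishes_to_order_e1_iff vanishes_to_order_e2_iff vanishes_to_order_e3_iff by blast+
  with \<open>i + j + k = 6\<close> show ?thesis by (simp add: m sextic_exps_def)
qed

lemma SB_eq_sextic:
  assumes "f \<in> SB"
  shows "f = sextic (\<lambda>i. f (i, 3 - i, 3))"
proof -
  have outside: "\<And>m. m \<notin> sextic_exps \<Longrightarrow> f m = 0"
    using SB_support[OF assms] by blast
  have eq: "(\<Sum>(i, j, k)\<in>sextic_exps. f (i, j, k) * ffact b j * ffact c k) = 0"
    if "b + c < 3" for b c
  proof -
    have "(\<Sum>(i, j, k)\<in>sextic_exps. f (i, j, k) * ffact 0 i * ffact b j * ffact c k) =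
        pderiv_eval 6 f (0, b, c) (1, 1, 1)"
      by (rule pderiv_eval_at_111[OF sextic_exps_subset_mons, symmetric]) (rule outside)
    also have "\<dots> = 0"
      using assms that unfolding SB_def Bpts_def vanishes_to_order_def by auto
    finally show ?thesis by simp
  qed
  have rel: "f (1,3,2) = -3 * f (0,3,3) - f (1,2,3)" "f (2,3,1) = 3 * f (0,3,3) + 2 * f (1,2,3) + f (2,1,3)"
    "f (3,3,0) = - f (0,3,3) - f (1,2,3) - f (2,1,3) - f (3,0,3)" "f (2,2,2) = -2 * f (1,2,3) - 2 * f (2,1,3)"
    "f (3,2,1) = f (1,2,3) + 2 * f (2,1,3) + 3 * f (3,0,3)" "f (3,1,2) = - f (2,1,3) - 3 * f (3,0,3)"
    using eq[of 0 0] eq[of 1 0] eq[of 0 1] eq[of 2 0] eq[of 1 1] eq[of 0 2]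
    unfolding sextic_exps_eq by (simp_all add: algebra_simps) algebra+
  show ?thesis
  proof (rule ext)
    fix m
    show "f m = sextic (\<lambda>i. f (i, 3 - i, 3)) m"
    proof (cases "m \<in> sextic_exps")
      case True
      with rel show ?thesis unfolding sextic_exps_eq
        by (elim insertE emptyE) (simp_all add: sextic_def)
    qed (simp add: outside sextic_outside)
  qed
qed

lemma SB_eq_range_sextic: "SB = range sextic"
  using sextic_in_SB SB_eq_sextic by blast

lemma proportional_sextic_iff:
  assumes "degree P \<le> 3" "degree Q \<le> 3"
  shows "proportional (sextic (coeff P)) (sextic (coeff Q)) \<longleftrightarrow> (\<exists>c. c \<noteq> 0 \<and> Q = smult c P)"
proof -
  have "sextic (coeff Q) = (\<lambda>m. c * sextic (coeff P) m) \<longleftrightarrow> Q = smult c P" for c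
    using assms by (simp add: sextic_smult[symmetric] sextic_eq_iff poly_eq_iff_coeffs_upto)
  then show ?thesis unfolding proportional_def by blast
qed

lemma sextic_coeff_eq_zpoly_iff:
  assumes "degree P \<le> 3"
  shows "sextic (coeff P) = zpoly \<longleftrightarrow> P = 0"
proof -
  have "sextic (coeff P) = zpoly \<longleftrightarrow> (\<forall>i\<le>3. coeff P i = coeff 0 i)"
    by (simp add: sextic_zero[symmetric] sextic_eq_iff)
  also have "\<dots> \<longleftrightarrow> P = 0"
    using poly_eq_iff_coeffs_upto[OF assms, of 0] by simp
  finally show ?thesis .
qed

section \<open>The quadrics \<open>Q\<^sub>B\<close> and the product map\<close>

definition quadric :: "complex poly \<Rightarrow> tpoly" where
  "quadric p = quad (coeff p 0) (coeff p 1) (- coeff p 0 - coeff p 1)"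

lemma quadric_pCons: "quadric [:x, y:] = quad x y (- x - y)"
  by (simp add: quadric_def)

lemma quadric_smult: "quadric (smult c p) = (\<lambda>m. c * quadric p m)"
  by (simp add: quadric_def quad_def fun_eq_iff algebra_simps)

lemma quadric_in_QB: "quadric p \<in> QB"
  unfolding QB_def quadric_def by force

definition linear_form :: "tpoly \<Rightarrow> complex poly" where
  "linear_form q = [:q (0, 1, 1), q (1, 0, 1):]"

lemma degree_linear_form: "degree (linear_form q) \<le> 1"
  by (simp add: linear_form_def)

lemma quadric_linear_form:
  assumes "q \<in> QB"
  shows "quadric (linear_form q) = q"
proof -
  obtain a1 a2 a3 where q: "q = quad a1 a2 a3" and sum: "a1 + a2 + a3 = 0"
    using assms unfolding QB_def by blast
  from sum have "a3 = - a1 - a2" by algebra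
  then show ?thesis unfolding q by (simp add: quadric_def linear_form_def quad_def)
qed

lemma QB_eq_zpoly_iff:
  assumes "q \<in> QB"
  shows "q = zpoly \<longleftrightarrow> linear_form q = 0"
proof
  assume "linear_form q = 0"
  then have "q = quadric 0" using quadric_linear_form[OF assms] by simp
  then show "q = zpoly" by (simp add: quadric_def quad_def zpoly_def fun_eq_iff)
qed (simp add: linear_form_def zpoly_def)

lemma proportional_QB_iff:
  assumes "q \<in> QB" "q' \<in> QB"
  shows "proportional q q' \<longleftrightarrow> (\<exists>c. c \<noteq> 0 \<and> linear_form q' = smult c (linear_form q))"
proof
  assume "proportional q q'"
  then obtain c where "c \<noteq> 0" "q' = (\<lambda>m. c * q m)" unfolding proportional_def by blast
  then show "\<exists>c. c \<noteq> 0 \<and> linear_form q' = smult c (linear_form q)"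
    by (auto simp: linear_form_def)
next
  assume "\<exists>c. c \<noteq> 0 \<and> linear_form q' = smult c (linear_form q)"
  then obtain c where "c \<noteq> 0" and lf: "linear_form q' = smult c (linear_form q)" by blast
  have "q' = quadric (linear_form q')"
    using quadric_linear_form[OF assms(2)] by simp
  also have "\<dots> = (\<lambda>m. c * q m)"
    by (simp add: lf quadric_smult quadric_linear_form[OF assms(1)])
  finally have "q' = (\<lambda>m. c * q m)" .
  with \<open>c \<noteq> 0\<close> show "proportional q q'" unfolding proportional_def by blast
qed

lemma prod3_quad:
  "prod3 (quad a0 a1 (- a0 - a1)) (quad b0 b1 (- b0 - b1)) (quad d0 d1 (- d0 - d1)) =
     sextic (coeff ([:a0, a1:] * [:b0, b1:] * [:d0, d1:]))"
  (is "?L = ?R")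
proof -
  have terms: "quad x y (- x - y) = tpoly_of_terms [((0,1,1), x), ((1,0,1), y), ((1,1,0), - x - y)]" for x y
    unfolding quad_def tpoly_of_terms_def by auto
  show ?thesis
  proof (rule ext)
    fix m
    have coeffs: "coeff ([:a0, a1:] * [:b0, b1:] * [:d0, d1:]) 0 = a0*b0*d0"
      "coeff ([:a0, a1:] * [:b0, b1:] * [:d0, d1:]) 1 = a0*b0*d1 + a0*b1*d0 + a1*b0*d0"
      "coeff ([:a0, a1:] * [:b0, b1:] * [:d0, d1:]) 2 = a0*b1*d1 + a1*b0*d1 + a1*b1*d0"
      "coeff ([:a0, a1:] * [:b0, b1:] * [:d0, d1:]) 3 = a1*b1*d1"
      by (simp_all add: eval_nat_numeral algebra_simps)
    show "?L m = ?R m"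
    proof (cases "m \<in> sextic_exps")
      case True
      then show ?thesis unfolding prod3_def terms pmul_terms sextic_def coeffs sextic_exps_eq
        by (elim insertE emptyE) (simp_all add: mult_terms_def tpoly_of_terms_def algebra_simps)
    next
      case False
      have "fst ` set (mult_terms [((0,1,1), a0), ((1,0,1), a1), ((1,1,0), - a0 - a1)]
          (mult_terms [((0,1,1), b0), ((1,0,1), b1), ((1,1,0), - b0 - b1)]
            [((0,1,1), d0), ((1,0,1), d1), ((1,1,0), - d0 - d1)])) \<subseteq> sextic_exps"
        by (auto simp: mult_terms_def sextic_exps_def)
      with False show ?thesis unfolding prod3_def terms pmul_terms sextic_outside[OF False]
        by (auto intro: tpoly_of_terms_outside)
    qed
  qed
qed

lemma prod3_quadric:
  assumes "degree p \<le> 1" "degree q \<le> 1" "degree r \<le> 1"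
  shows "prod3 (quadric p) (quadric q) (quadric r) = sextic (coeff (p * q * r))"
  using prod3_quad[of "coeff p 0" "coeff p 1" "coeff q 0" "coeff q 1" "coeff r 0" "coeff r 1"]
  unfolding quadric_pCons[symmetric] linear_poly_eq[OF assms(1), symmetric]
    linear_poly_eq[OF assms(2), symmetric] linear_poly_eq[OF assms(3), symmetric] .

lemma prod3_QB:
  assumes "q1 \<in> QB" "q2 \<in> QB" "q3 \<in> QB"
  shows "prod3 q1 q2 q3 = sextic (coeff (linear_form q1 * linear_form q2 * linear_form q3))"
proof -
  have "prod3 (quadric (linear_form q1)) (quadric (linear_form q2)) (quadric (linear_form q3)) =
      sextic (coeff (linear_form q1 * linear_form q2 * linear_form q3))"
    by (rule prod3_quadric) (rule degree_linear_form)+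
  then show ?thesis by (simp add: assms quadric_linear_form)
qed

lemma prod3_QB_nonzero:
  assumes "q1 \<in> QB" "q2 \<in> QB" "q3 \<in> QB" "q1 \<noteq> zpoly" "q2 \<noteq> zpoly" "q3 \<noteq> zpoly"
  shows "prod3 q1 q2 q3 \<noteq> zpoly"
proof -
  let ?P = "linear_form q1 * linear_form q2 * linear_form q3"
  have "?P \<noteq> 0" using assms by (simp add: QB_eq_zpoly_iff)
  moreover have "degree ?P \<le> 3"
    by (intro degree_mult3_le degree_linear_form)
  ultimately show ?thesis by (simp add: assms prod3_QB sextic_coeff_eq_zpoly_iff)
qed

lemma SB_obtain_cubic:
  assumes "f \<in> SB"
  obtains P where "degree P \<le> 3" "f = sextic (coeff P)"
proof -
  obtain c where f: "f = sextic c" using assms SB_eq_range_sextic by blast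
  define P where "P = [:c 0, c 1, c 2, c 3:]"
  have "coeff P i = c i" if "i \<le> 3" for i
  proof -
    from that have "i = 0 \<or> i = 1 \<or> i = 2 \<or> i = 3" by arith
    then show ?thesis by (elim disjE) (simp_all add: P_def numeral_2_eq_2 numeral_3_eq_3)
  qed
  then have "f = sextic (coeff P)"
    unfolding f sextic_eq_iff by simp
  moreover have "degree P \<le> 3" by (simp add: P_def)
  ultimately show ?thesis using that by blast
qed

lemma SB_nonzero_prod3:
  assumes "f \<in> SB" "f \<noteq> zpoly"
  shows "\<exists>q1\<in>QB. \<exists>q2\<in>QB. \<exists>q3\<in>QB. proportional (prod3 q1 q2 q3) f"
proof -
  obtain P where deg: "degree P \<le> 3" and f: "f = sextic (coeff P)"
    using SB_obtain_cubic[OF assms(1)] by blast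
  obtain p :: "nat \<Rightarrow> complex poly" where p: "\<And>i. i < 3 \<Longrightarrow> degree (p i) \<le> 1"
    and P: "P = smult (lead_coeff P) (\<Prod>i<3. p i)"
    using complex_poly_prod_linear_factors[OF deg] by blast
  have "P \<noteq> 0"
    using assms(2) f sextic_coeff_eq_zpoly_iff[OF deg] by blast
  then have "lead_coeff P \<noteq> 0" by simp
  have P3: "(\<Prod>i<3. p i) = p 0 * p 1 * p 2" by (simp add: lessThan_nat_numeral mult_ac)
  have "prod3 (quadric (p 0)) (quadric (p 1)) (quadric (p 2)) = sextic (coeff (p 0 * p 1 * p 2))"
    by (intro prod3_quadric p) simp_all
  moreover have "proportional (sextic (coeff (p 0 * p 1 * p 2))) f"
    unfolding f
  proof (subst proportional_sextic_iff)
    show "degree (p 0 * p 1 * p 2) \<le> 3" by (intro degree_mult3_le p) simp_all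
    show "\<exists>k. k \<noteq> 0 \<and> P = smult k (p 0 * p 1 * p 2)"
      using P \<open>lead_coeff P \<noteq> 0\<close> unfolding P3 by blast
  qed (rule deg)
  ultimately have "proportional (prod3 (quadric (p 0)) (quadric (p 1)) (quadric (p 2))) f"
    by simp
  then show ?thesis using quadric_in_QB by blast
qed

lemma prod3_proportional_iff:
  fixes q q' :: "nat \<Rightarrow> tpoly"
  assumes "\<forall>i<3. q i \<in> QB - {zpoly} \<and> q' i \<in> QB - {zpoly}"
  shows "proportional (prod3 (q 0) (q 1) (q 2)) (prod3 (q' 0) (q' 1) (q' 2)) \<longleftrightarrow>
    (\<exists>\<sigma>. bij_betw \<sigma> {0::nat, 1, 2} {0, 1, 2} \<and> (\<forall>i<3. proportional (q (\<sigma> i)) (q' i)))"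
proof -
  define p where "p i = linear_form (q i)" for i
  define p' where "p' i = linear_form (q' i)" for i
  have QB: "q i \<in> QB" "q' i \<in> QB" if "i < 3" for i
    using assms that by auto
  have lin: "p i \<noteq> 0 \<and> degree (p i) \<le> 1" "p' i \<noteq> 0 \<and> degree (p' i) \<le> 1" if "i < 3" for i
    using assms that QB_eq_zpoly_iff[OF QB(1)[OF that]] QB_eq_zpoly_iff[OF QB(2)[OF that]]
      degree_linear_form by (auto simp: p_def p'_def)
  have prod_3: "(\<Prod>i<3. f i) = f 0 * f 1 * f 2" for f :: "nat \<Rightarrow> complex poly"
    by (simp add: lessThan_nat_numeral mult_ac)
  have "proportional (prod3 (q 0) (q 1) (q 2)) (prod3 (q' 0) (q' 1) (q' 2)) \<longleftrightarrow>
      (\<exists>k. k \<noteq> 0 \<and> (\<Prod>i<3. p' i) = smult k (\<Prod>i<3. p i))"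
    unfolding prod_3 using lin
    by (simp add: QB prod3_QB p_def p'_def proportional_sextic_iff degree_mult3_le)
  also have "\<dots> \<longleftrightarrow>
      (\<exists>\<sigma>. bij_betw \<sigma> {..<3} {..<3} \<and> (\<forall>i<3. \<exists>c. c \<noteq> 0 \<and> p' i = smult c (p (\<sigma> i))))"
    by (rule prod_linear_factors_smult_iff[where n = 3, OF lin])
  also have "\<dots> \<longleftrightarrow> (\<exists>\<sigma>. bij_betw \<sigma> {0::nat, 1, 2} {0, 1, 2} \<and> (\<forall>i<3. proportional (q (\<sigma> i)) (q' i)))"
  proof -
    have three: "{..<3::nat} = {0, 1, 2}" by (auto simp: lessThan_nat_numeral)
    have "(\<exists>c. c \<noteq> 0 \<and> p' i = smult c (p (\<sigma> i))) \<longleftrightarrow> proportional (q (\<sigma> i)) (q' i)"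
      if "bij_betw \<sigma> {..<3} {..<3}" "i < 3" for \<sigma> i
    proof -
      have "\<sigma> i < 3" using bij_betwE[OF that(1)] that(2) by blast
      with that(2) show ?thesis
        unfolding p_def p'_def by (simp add: proportional_QB_iff QB)
    qed
    then show ?thesis unfolding three[symmetric] by blast
  qed
  finally show ?thesis .
qed

theorem lemma3p3:
  shows "(\<exists>g :: nat \<Rightarrow> tpoly.
            SB = {(\<lambda>m. \<Sum>i<4. c i * g i m) | c. True} \<and>
            (\<forall>c. (\<lambda>m. \<Sum>i<4. c i * g i m) = zpoly \<longrightarrow> (\<forall>i<4. c i = 0)))
       \<and> (\<forall>q1\<in>QB. \<forall>q2\<in>QB. \<forall>q3\<in>QB. prod3 q1 q2 q3 \<in> SB)
       \<and> (\<forall>q1\<in>QB. \<forall>q2\<in>QB. \<forall>q3\<in>QB.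
            q1 \<noteq> zpoly \<and> q2 \<noteq> zpoly \<and> q3 \<noteq> zpoly \<longrightarrow> prod3 q1 q2 q3 \<noteq> zpoly)
       \<and> (\<forall>f\<in>SB. f \<noteq> zpoly \<longrightarrow>
            (\<exists>q1\<in>QB. \<exists>q2\<in>QB. \<exists>q3\<in>QB. proportional (prod3 q1 q2 q3) f))
       \<and> (\<forall>q q' :: nat \<Rightarrow> tpoly.
            (\<forall>i<3. q i \<in> QB - {zpoly} \<and> q' i \<in> QB - {zpoly}) \<longrightarrow>
            (proportional (prod3 (q 0) (q 1) (q 2)) (prod3 (q' 0) (q' 1) (q' 2))
             \<longleftrightarrow> (\<exists>\<sigma>. bij_betw \<sigma> {0::nat, 1, 2} {0, 1, 2} \<and>
                       (\<forall>i<3. proportional (q (\<sigma> i)) (q' i)))))"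
proof (intro conjI)
  let ?g = "\<lambda>i::nat. sextic (\<lambda>j. if j = i then 1 else 0)"
  have span: "SB = {(\<lambda>m. \<Sum>i<4. c i * ?g i m) | c. True}"
    unfolding sextic_sum_basis SB_eq_range_sextic by auto
  have independent: "\<forall>c. (\<lambda>m. \<Sum>i<4. c i * ?g i m) = zpoly \<longrightarrow> (\<forall>i<4. c i = 0)"
    unfolding sextic_sum_basis sextic_zero[symmetric] sextic_eq_iff by auto
  show "\<exists>g :: nat \<Rightarrow> tpoly. SB = {(\<lambda>m. \<Sum>i<4. c i * g i m) | c. True} \<and>
      (\<forall>c. (\<lambda>m. \<Sum>i<4. c i * g i m) = zpoly \<longrightarrow> (\<forall>i<4. c i = 0))"
    by (intro exI[of _ ?g] conjI span independent)
  show "\<forall>q1\<in>QB. \<forall>q2\<in>QB. \<forall>q3\<in>QB. prod3 q1 q2 q3 \<in> SB"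
    by (simp add: prod3_QB sextic_in_SB)
qed (use prod3_QB_nonzero SB_nonzero_prod3 prod3_proportional_iff in blast)+

end
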